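(* Let $r\geq1$ be odd, $m\geq 3$, $n=(r+1)m$, let $u$ be an integer with $\gcd(u,2^m-1)=1$, let $\alpha$ be a primitive element of $\mathbb{F}_{2^{rm}}$, and let $0\leq s,l\leq 2^{rm}-2$ be integers. For $0\le k\le 2^{rm}-2$ let $\Delta_k=\{\alpha^i\mid k\leq i\leq k+2^{rm-1}-1\}$. Let $F\colon\mathbb{F}_{2^{rm}}\times\mathbb{F}_{2^m}\to\mathbb{F}_2$ be the Boolean function with $$\mathrm{supp}(F)=\{(\gamma y^u,y)\mid y\in\mathbb{F}_{2^m}^*,\ \gamma\in\Delta_s\}\cup\{(\gamma,0)\mid\gamma\in\Delta_l\}.$$ Then the bivariate representation of $F$ over $\mathbb{F}_{2^{rm}}\times\mathbb{F}_{2^m}$ is $$F(x,y)=\sum_{\substack{i=1\\(2^m-1)\nmid i}}^{2^{rm}-2}\alpha^{-is}(1+\alpha^{-i})^{2^{rm-1}-1}x^iy^{2^m-1-\overline{ui}}+\sum_{j=1}^{\frac{2^{rm}-1}{2^m-1}-1}\alpha^{-(2^m-1)js}\bigl(1+\alpha^{-(2^m-1)j}\bigr)^{2^{rm-1}-1}x^{(2^m-1)j}y^{2^m-1}$$ $$\qquad+\sum_{i=1}^{2^{rm}-2}\alpha^{-il}(1+\alpha^{-i})^{2^{rm-1}-1}x^i(1+y^{2^m-1}),$$ where $\overline{ui}$ denotes the reduction of $ui$ modulo $2^m-1$ in $\{0,1,\dots,2^m-2\}$. Consequently $\deg F=n-1$.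
   Context: $\mathbb{F}_{2^{rm}}\times\mathbb{F}_{2^m}$ is viewed as an $n$-dimensional $\mathbb{F}_2$-vector space ($\mathbb{F}_{2^m}\subseteq\mathbb{F}_{2^{rm}}$). The bivariate representation of a Boolean function on $\mathbb{F}_{2^{rm}}\times\mathbb{F}_{2^m}$ is the unique polynomial $\sum_{i=0}^{2^{rm}-1}\sum_{j=0}^{2^m-1}c_{i,j}x^iy^j$ with $c_{i,j}\in\mathbb{F}_{2^{rm}}$ agreeing with the function everywhere. $\deg F$ is the algebraic degree of $F$ (degree of its algebraic normal form in $n$ binary coordinates). *)

theory Defs
  imports Main
begin

text \<open>The subfield F_(2^m) of a finite field 'a of order 2^(r m): the fixed points of y -> y^(2^m).\<close>
definition subfield_K :: "nat \<Rightarrow> 'a::field set" where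
  "subfield_K m = {y. y ^ (2 ^ m) = y}"

definition is_bivariate_rep :: "nat \<Rightarrow> nat \<Rightarrow> ('a \<times> 'a \<Rightarrow> 'a) \<Rightarrow> (nat \<Rightarrow> nat \<Rightarrow> 'a::field) \<Rightarrow> bool" where
  "is_bivariate_rep r m F c \<longleftrightarrow>
     (\<forall>i j. (2 ^ (r * m) \<le> i \<or> 2 ^ m \<le> j) \<longrightarrow> c i j = 0) \<and>
     (\<forall>x y. y \<in> subfield_K m \<longrightarrow>
        F (x, y) = (\<Sum>i<2 ^ (r * m). \<Sum>j<2 ^ m. c i j * x ^ i * y ^ j))"

definition bivariate_rep :: "nat \<Rightarrow> nat \<Rightarrow> ('a \<times> 'a \<Rightarrow> 'a) \<Rightarrow> (nat \<Rightarrow> nat \<Rightarrow> 'a::field)" where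
  "bivariate_rep r m F = (THE c. is_bivariate_rep r m F c)"

text \<open>Binary coordinates: the point with coordinate vector the indicator of T, w.r.t. the
  vectors b 0, b 1, ...\<close>
definition F2_coords :: "(nat \<Rightarrow> 'a::comm_monoid_add \<times> 'a) \<Rightarrow> nat set \<Rightarrow> 'a \<times> 'a" where
  "F2_coords b T = ((\<Sum>t\<in>T. fst (b t)), (\<Sum>t\<in>T. snd (b t)))"

definition is_F2_basis :: "nat \<Rightarrow> ('a::comm_monoid_add \<times> 'a) set \<Rightarrow> (nat \<Rightarrow> 'a \<times> 'a) \<Rightarrow> bool" where
  "is_F2_basis n D b \<longleftrightarrow> bij_betw (F2_coords b) (Pow {..<n}) D"

text \<open>ANF coefficient of the monomial prod_{i in S} x_i (Moebius transform over F_2).\<close>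
definition anf_coeff :: "(nat \<Rightarrow> 'a::comm_monoid_add \<times> 'a) \<Rightarrow> ('a \<times> 'a \<Rightarrow> bool) \<Rightarrow> nat set \<Rightarrow> bool" where
  "anf_coeff b F S \<longleftrightarrow> odd (card {T. T \<subseteq> S \<and> F (F2_coords b T)})"

definition alg_degree :: "nat \<Rightarrow> (nat \<Rightarrow> 'a::comm_monoid_add \<times> 'a) \<Rightarrow> ('a \<times> 'a \<Rightarrow> bool) \<Rightarrow> nat" where
  "alg_degree n b F = Max (insert 0 {card S | S. S \<subseteq> {..<n} \<and> anf_coeff b F S})"

definition Delta_set :: "nat \<Rightarrow> nat \<Rightarrow> 'a::field \<Rightarrow> nat \<Rightarrow> 'a set" where
  "Delta_set r m \<alpha> k = {\<alpha> ^ i | i. k \<le> i \<and> i \<le> k + 2 ^ (r * m - 1) - 1}"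

end

theory Submission
  imports Defs "HOL-Number_Theory.Residues" "HOL-Computational_Algebra.Polynomial"
begin

(* In characteristic 2, for z \<noteq> 0 with z^(2^rm-1) = 1 the sum z + z^2 + ... + z^(2^rm-2) is 0 if
  z = 1 and 1 otherwise. Summing over the 2^(rm-1) (an even number of) elements \<gamma> of \<Delta>_k with
  z = x/\<gamma> shows that the indicator of \<Delta>_k is the univariate polynomial with coefficients
  A_k(i) = \<Sum>_{\<gamma> \<in> \<Delta>_k} \<gamma>^(-i); the closed form of A_k(i) is (1 + b)^(2^e-1) = 1 + b + ... + b^(2^e-1).
  For y \<noteq> 0 in F_(2^m) we have F(x,y) = 1_{\<Delta>_s}(x y^(-u)) with y^(-ui) = y^(2^m-1-\<overline>ui), and
  F(x,0) = 1_{\<Delta>_l}(x), while 1 + y^(2^m-1) is the indicator of y = 0. The representation is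
  unique because a polynomial of degree < 2^rm (resp. < 2^m) vanishing on F_(2^rm) (resp. F_(2^m))
  is zero.

  For the degree: the ANF coefficient of the full monomial is the parity of the weight of F, which
  is even; if all monomials of degree n-1 had zero coefficient, every binary coordinate would be 1
  an even number of times on supp F, so the points of supp F would sum to 0. But their first
  coordinates sum to (\<Sum>_{\<Delta>_s} \<gamma>)(\<Sum>_{y \<in> F_(2^m)^*} y^u) + \<Sum>_{\<Delta>_l} \<gamma>, where the middle factor
  vanishes as u is coprime to 2^m - 1 and the last sum is \<alpha>^l (1 + \<alpha>^(2^(rm-1))) / (1 + \<alpha>) \<noteq> 0. *)

section \<open>Characteristic two\<close>

lemma two_eq_zero_if_card_eq_power_two:
  assumes "card (UNIV :: 'a::{field,finite} set) = 2 ^ k" and "k > 0"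
  shows "(2::'a) = 0"
proof -
  have prime: "prime CHAR('a)" by (rule prime_CHAR_semidom, rule finite_imp_CHAR_pos) simp
  have "CHAR('a) dvd 2 ^ k" using CHAR_dvd_CARD[where 'a='a] assms(1) by simp
  hence "CHAR('a) dvd 2" using prime_dvd_power[OF prime] by blast
  hence "CHAR('a) = 2"
    using prime dvd_imp_le[of "CHAR('a)" 2] prime_ge_2_nat[of "CHAR('a)"] by simp
  thus ?thesis using of_nat_CHAR[where 'a='a] by simp
qed

lemma char2_add_self: "(2::'a::comm_ring_1) = 0 \<Longrightarrow> x + x = (0::'a)"
  by (metis mult_2 mult_zero_left)

lemma char2_minus: "(2::'a::comm_ring_1) = 0 \<Longrightarrow> - x = (x::'a)"
  by (metis add_eq_0_iff2 char2_add_self)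

lemma char2_of_nat_even: "(2::'a::comm_ring_1) = 0 \<Longrightarrow> even n \<Longrightarrow> (of_nat n :: 'a) = 0"
  by (auto elim!: evenE)

lemma char2_add_power_two_power:
  assumes "(2::'a::comm_ring_1) = 0"
  shows "(a + b) ^ 2 ^ e = a ^ 2 ^ e + (b::'a) ^ 2 ^ e"
proof (induction e)
  case (Suc e)
  have "(a + b) ^ 2 ^ Suc e = ((a + b) ^ 2 ^ e) ^ 2"
    by (simp add: power_mult[symmetric] mult.commute)
  also have "\<dots> = (a ^ 2 ^ e) ^ 2 + (b ^ 2 ^ e) ^ 2 + 2 * a ^ 2 ^ e * b ^ 2 ^ e"
    using Suc by (simp add: power2_eq_square algebra_simps)
  also have "\<dots> = a ^ 2 ^ Suc e + b ^ 2 ^ Suc e"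
    using assms by (simp add: power_mult[symmetric] mult.commute)
  finally show ?case .
qed simp

lemma char2_one_add_power_pred:
  fixes b :: "'a::field"
  assumes char2: "(2::'a) = 0" and "e > 0"
  shows "(1 + b) ^ (2 ^ e - 1) = (\<Sum>t<2 ^ e. b ^ t)"
proof (cases "b = 1")
  case True
  have "1 + b = 0" using True char2 by simp
  moreover have "(2::nat) ^ e - 1 > 0" using one_less_power[of "2::nat" e] assms(2) by simp
  ultimately have lhs: "(1 + b) ^ (2 ^ e - 1) = 0" by simp
  have "(\<Sum>t<2 ^ e. b ^ t) = (2::'a) ^ e" using True by simp
  also have "\<dots> = 0" using char2 assms(2) by simp
  finally show ?thesis using lhs by simp
next
  case False
  have nonzero: "1 + b \<noteq> 0"
  proof
    assume "1 + b = 0"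
    hence "b = - 1" by (simp add: eq_neg_iff_add_eq_0 add.commute)
    thus False using False char2_minus[OF char2, of 1] by simp
  qed
  have "(1 + b) * (1 + b) ^ (2 ^ e - 1) = (1 + b) ^ 2 ^ e" by (simp flip: power_Suc)
  also have "\<dots> = 1 + b ^ 2 ^ e"
    by (simp only: char2_add_power_two_power[OF char2, of 1 b e] power_one)
  also have "\<dots> = (1 + b) * (\<Sum>t<2 ^ e. b ^ t)"
  proof -
    have "1 - b = 1 + b" "1 - b ^ 2 ^ e = 1 + b ^ 2 ^ e"
      by (simp_all only: diff_conv_add_uminus char2_minus[OF char2])
    thus ?thesis using one_diff_power_eq[of b "2 ^ e"] by (simp only:)
  qed
  finally show ?thesis using nonzero by simp
qed

lemma char2_sum_powers_eq_indicator:
  fixes z :: "'a::field"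
  assumes char2: "(2::'a) = 0" and "z ^ n = 1" and "odd n"
  shows "(\<Sum>i\<in>{1..<n}. z ^ i) = (if z = 1 then 0 else 1)"
proof (cases "z = 1")
  case True
  have "even (n - 1)" using assms(3) by simp
  thus ?thesis using True char2_of_nat_even[OF char2, of "n - 1"] by simp
next
  case False
  have "(1 - z) * (\<Sum>i<n. z ^ i) = 0" using assms(2) one_diff_power_eq[of z n] by simp
  hence "(\<Sum>i<n. z ^ i) = 0" using False by simp
  moreover have "(\<Sum>i<n. z ^ i) = 1 + (\<Sum>i\<in>{1..<n}. z ^ i)"
    using odd_pos[OF assms(3)] by (simp add: atLeast0LessThan[symmetric] sum.atLeast_Suc_lessThan)
  ultimately have "(\<Sum>i\<in>{1..<n}. z ^ i) = - 1" by (simp add: add_eq_0_iff)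
  thus ?thesis using False char2_minus[OF char2, of 1] by simp
qed

section \<open>Powers and roots in fields\<close>

lemma power_eq_power_mod: "(a::'a::monoid_mult) ^ n = 1 \<Longrightarrow> a ^ i = a ^ (i mod n)"
proof -
  assume "a ^ n = 1"
  have "a ^ i = (a ^ n) ^ (i div n) * a ^ (i mod n)"
    by (simp only: power_mult[symmetric] power_add[symmetric] mult_div_mod_eq)
  thus ?thesis using \<open>a ^ n = 1\<close> by simp
qed

lemma power_int_eq_power_mod:
  fixes z :: "'a::field"
  assumes "z ^ n = 1" and "n > 0"
  shows "z powi k = z ^ nat (k mod int n)"
proof -
  have "z \<noteq> 0" using assms by (auto simp: power_0_left)
  have "z powi k = z powi (int n * (k div int n)) * z powi (k mod int n)"
    using \<open>z \<noteq> 0\<close> by (simp add: power_int_add[symmetric])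
  also have "z powi (int n * (k div int n)) = 1"
    by (simp add: power_int_mult assms(1))
  also have "z powi (k mod int n) = z ^ nat (k mod int n)"
    using assms(2) by (simp add: power_int_nonneg_exp)
  finally show ?thesis by simp
qed

lemma power_int_eq_one_iff:
  fixes z :: "'a::field"
  assumes "\<And>i. z ^ i = 1 \<longleftrightarrow> n dvd i" and "n > 0"
  shows "z powi k = 1 \<longleftrightarrow> int n dvd k"
proof -
  have mod_bounds: "0 \<le> k mod int n" "k mod int n < int n" using assms(2) by simp_all
  have "z powi k = 1 \<longleftrightarrow> n dvd nat (k mod int n)"
    using power_int_eq_power_mod[of z n k] assms by simp
  also have "\<dots> \<longleftrightarrow> k mod int n = 0"
  proof
    assume "n dvd nat (k mod int n)"
    moreover have "nat (k mod int n) < n" using mod_bounds by (simp add: nat_less_iff)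
    ultimately have "nat (k mod int n) = 0" by (metis gr0I nat_dvd_not_less)
    thus "k mod int n = 0" using mod_bounds(1) by simp
  qed simp
  finally show ?thesis by (simp add: mod_eq_0_iff_dvd)
qed

lemma inj_on_power_window:
  fixes a :: "'a::field"
  assumes "a \<noteq> 0" and order: "\<And>i. a ^ i = 1 \<longleftrightarrow> n dvd i"
  shows "inj_on (\<lambda>t. a ^ t) {k..<k + n}"
proof -
  have "i = j" if "i \<le> j" "i \<in> {k..<k + n}" "j \<in> {k..<k + n}" "a ^ i = a ^ j" for i j
  proof -
    have "a ^ j = a ^ i * a ^ (j - i)" using that(1) by (simp add: power_add[symmetric])
    hence "n dvd j - i" using that(4) assms(1) order by simp
    moreover have "j - i < n" using that(2,3) by auto
    ultimately have "j - i = 0" by (metis gr0I nat_dvd_not_less)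
    thus ?thesis using that(1) by simp
  qed
  thus ?thesis by (metis inj_onI nle_le)
qed

lemma ex_pos_power_eq_one:
  fixes a :: "'a::{field,finite}"
  assumes "a \<noteq> 0"
  shows "\<exists>n > 0. a ^ n = 1"
proof -
  let ?q = "card (UNIV :: 'a set)"
  have "\<not> inj_on (\<lambda>i. a ^ i) {..?q}"
  proof (rule pigeonhole)
    have "card ((\<lambda>i. a ^ i) ` {..?q}) \<le> ?q" by (intro card_mono) auto
    thus "card ((\<lambda>i. a ^ i) ` {..?q}) < card {..?q}" by simp
  qed
  then obtain i j where "i < j" "a ^ i = a ^ j"
    unfolding inj_on_def by (metis linorder_neqE_nat)
  moreover have "a ^ j = a ^ i * a ^ (j - i)" using \<open>i < j\<close> by (simp add: power_add[symmetric])
  ultimately show ?thesis using assms by (intro exI[of _ "j - i"]) auto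
qed

lemma primitive_element_nonzero:
  fixes \<alpha> :: "'a::{field,finite}"
  assumes "\<forall>x::'a. x \<noteq> 0 \<longrightarrow> (\<exists>i::nat. x = \<alpha> ^ i)" and "card (UNIV :: 'a set) \<ge> 3"
  shows "\<alpha> \<noteq> 0"
proof
  assume "\<alpha> = 0"
  hence "UNIV \<subseteq> {0, 1::'a}" using assms(1) by (auto simp: zero_power)
  hence "card (UNIV :: 'a set) \<le> card {0, 1::'a}" by (intro card_mono) auto
  also have "\<dots> \<le> 2" by (simp add: card_insert_le_m1)
  finally show False using assms(2) by simp
qed

lemma primitive_element_power_eq_one_iff:
  fixes \<alpha> :: "'a::{field,finite}"
  assumes primitive: "\<forall>x::'a. x \<noteq> 0 \<longrightarrow> (\<exists>i::nat. x = \<alpha> ^ i)" and "\<alpha> \<noteq> 0"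
  shows "\<alpha> ^ i = 1 \<longleftrightarrow> (card (UNIV :: 'a set) - 1) dvd i"
proof -
  define ord where "ord = (LEAST n. 0 < n \<and> \<alpha> ^ n = 1)"
  have ord: "0 < ord" "\<alpha> ^ ord = 1"
    using LeastI_ex[OF ex_pos_power_eq_one[OF assms(2)]] unfolding ord_def by auto
  have dvd_ord: "\<alpha> ^ i = 1 \<longleftrightarrow> ord dvd i" for i
  proof
    assume "\<alpha> ^ i = 1"
    hence "\<alpha> ^ (i mod ord) = 1" using power_eq_power_mod[OF ord(2)] by metis
    moreover have "i mod ord < ord" using ord(1) by simp
    hence "\<not> (0 < i mod ord \<and> \<alpha> ^ (i mod ord) = 1)" unfolding ord_def by (rule not_less_Least)
    ultimately show "ord dvd i" by auto
  qed (use ord in \<open>auto simp: power_mult\<close>)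
  have "bij_betw (\<lambda>i. \<alpha> ^ i) {..<ord} (UNIV - {0})"
  proof (rule bij_betw_imageI)
    show "inj_on (\<lambda>i. \<alpha> ^ i) {..<ord}"
      using inj_on_power_window[OF assms(2) dvd_ord, of 0] by (simp add: lessThan_atLeast0)
    have "x \<in> (\<lambda>i. \<alpha> ^ i) ` {..<ord}" if "x \<noteq> 0" for x
    proof -
      obtain i where "x = \<alpha> ^ i" using primitive \<open>x \<noteq> 0\<close> by auto
      hence "x = \<alpha> ^ (i mod ord)" using power_eq_power_mod[OF ord(2)] by simp
      thus ?thesis using ord(1) by auto
    qed
    thus "(\<lambda>i. \<alpha> ^ i) ` {..<ord} = UNIV - {0}" using assms(2) by auto
  qed
  hence "card {..<ord} = card (UNIV - {0::'a})" by (rule bij_betw_same_card)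
  hence "ord = card (UNIV :: 'a set) - 1" by (simp add: card_Diff_singleton)
  thus ?thesis using dvd_ord by simp
qed

lemma coeff_eq_zero_if_vanishes_on:
  fixes a :: "nat \<Rightarrow> 'a::field"
  assumes "finite R" and "card R \<ge> n" and "\<forall>x\<in>R. (\<Sum>i<n. a i * x ^ i) = 0" and "i < n"
  shows "a i = 0"
proof -
  define p where "p = (\<Sum>i<n. monom (a i) i)"
  have poly_p: "poly p x = (\<Sum>i<n. a i * x ^ i)" for x
    unfolding p_def by (simp add: poly_sum poly_monom)
  have coeff_p: "coeff p j = (if j < n then a j else 0)" for j
    unfolding p_def by (simp add: coeff_sum coeff_monom)
  have "p = 0"
  proof (rule ccontr)
    assume "p \<noteq> 0"
    have "degree p \<le> n - 1" by (rule degree_le) (use coeff_p in auto)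
    moreover have "card {x. poly p x = 0} \<le> degree p" by (rule card_poly_roots_bound[OF \<open>p \<noteq> 0\<close>])
    moreover have "card R \<le> card {x. poly p x = 0}"
      using assms(3) poly_p by (intro card_mono poly_roots_finite[OF \<open>p \<noteq> 0\<close>]) auto
    ultimately show False using assms(2,4) by linarith
  qed
  thus ?thesis using coeff_p[of i] assms(4) by simp
qed

lemma pred_dvd_power_pred: "(x::nat) \<ge> 1 \<Longrightarrow> (x - 1) dvd (x ^ k - 1)"
proof -
  assume "x \<ge> 1"
  have "(int x - 1) dvd (int x ^ k - 1)" using power_diff_1_eq[of "int x" k] by simp
  thus ?thesis using \<open>x \<ge> 1\<close> by (simp add: of_nat_diff flip: int_dvd_int_iff)
qed

section \<open>Algebraic degree of a Boolean function of even weight\<close>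

lemma alg_degree_eq_pred:
  assumes "\<not> anf_coeff b F {..<n}" and "j < n" and "anf_coeff b F ({..<n} - {j})"
  shows "alg_degree n b F = n - 1"
proof -
  let ?Z = "{card X | X. X \<subseteq> {..<n} \<and> anf_coeff b F X}"
  have bound: "z \<le> n - 1" if "z \<in> ?Z" for z
  proof -
    obtain X where X: "z = card X" "X \<subseteq> {..<n}" "anf_coeff b F X" using \<open>z \<in> ?Z\<close> by blast
    have "card X \<noteq> n"
    proof
      assume "card X = n"
      hence "X = {..<n}" using card_subset_eq[of "{..<n}" X] X(2) by simp
      thus False using X(3) assms(1) by simp
    qed
    moreover have "card X \<le> n" using card_mono[OF _ X(2)] by simp
    ultimately show ?thesis using X(1) by simp
  qed
  have "Max (insert 0 ?Z) = n - 1"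
  proof (rule Max_eqI)
    have "?Z \<subseteq> {..n - 1}" using bound by auto
    thus "finite (insert 0 ?Z)" by (simp add: finite_subset)
    show "z \<le> n - 1" if "z \<in> insert 0 ?Z" for z using that bound by auto
    show "n - 1 \<in> insert 0 ?Z"
      using assms(2,3) by (intro insertI2 CollectI exI[of _ "{..<n} - {j}"]) auto
  qed
  thus ?thesis unfolding alg_degree_def .
qed

lemma sum_fst_F2_coords:
  fixes b :: "nat \<Rightarrow> 'a::comm_semiring_1 \<times> 'a"
  assumes "finite \<T>" and "\<T> \<subseteq> Pow {..<n}"
  shows "(\<Sum>T\<in>\<T>. fst (F2_coords b T)) = (\<Sum>t<n. of_nat (card {T \<in> \<T>. t \<in> T}) * fst (b t))"
proof -
  have "(\<Sum>T\<in>\<T>. fst (F2_coords b T)) = (\<Sum>T\<in>\<T>. \<Sum>t<n. if t \<in> T then fst (b t) else 0)"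
  proof (rule sum.cong[OF refl])
    fix T assume "T \<in> \<T>"
    hence "T = {..<n} \<inter> T" using assms(2) by auto
    thus "fst (F2_coords b T) = (\<Sum>t<n. if t \<in> T then fst (b t) else 0)"
      unfolding F2_coords_def by (simp add: sum.inter_restrict[symmetric])
  qed
  also have "\<dots> = (\<Sum>t<n. \<Sum>T\<in>\<T>. if t \<in> T then fst (b t) else 0)" by (rule sum.swap)
  also have "\<dots> = (\<Sum>t<n. of_nat (card {T \<in> \<T>. t \<in> T}) * fst (b t))"
    using assms(1) by (simp add: sum.inter_filter[symmetric])
  finally show ?thesis .
qed

lemma bij_betw_F2_coords_support:
  assumes "is_F2_basis n D b" and "P \<subseteq> D"
  shows "bij_betw (F2_coords b) {T \<in> Pow {..<n}. F2_coords b T \<in> P} P"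
proof -
  have bij: "bij_betw (F2_coords b) (Pow {..<n}) D" using assms(1) unfolding is_F2_basis_def .
  have "P \<subseteq> F2_coords b ` Pow {..<n}" using assms(2) bij_betw_imp_surj_on[OF bij] by simp
  hence "F2_coords b ` {T \<in> Pow {..<n}. F2_coords b T \<in> P} = P" by blast
  moreover have "inj_on (F2_coords b) {T \<in> Pow {..<n}. F2_coords b T \<in> P}"
    by (rule inj_on_subset[OF bij_betw_imp_inj_on[OF bij]]) auto
  ultimately show ?thesis by (simp add: bij_betw_def)
qed

text \<open>Coordinatewise, the sum of the points of \<open>P\<close> counts modulo 2 how often each binary
  coordinate is 1 on \<open>P\<close>; as \<open>|P|\<close> is even, this parity is the ANF coefficient of the monomial
  omitting that coordinate.\<close>

lemma alg_degree_eq_pred_if_sum_nonzero: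
  fixes b :: "nat \<Rightarrow> 'a::comm_ring_1 \<times> 'a"
  assumes char2: "(2::'a) = 0" and basis: "is_F2_basis n D b" and "P \<subseteq> D"
    and "even (card P)" and sum_nonzero: "(\<Sum>p\<in>P. fst p) \<noteq> 0"
  shows "alg_degree n b (\<lambda>p. p \<in> P) = n - 1"
proof -
  define \<T> where "\<T> = {T \<in> Pow {..<n}. F2_coords b T \<in> P}"
  have bij: "bij_betw (F2_coords b) \<T> P"
    unfolding \<T>_def by (rule bij_betw_F2_coords_support[OF basis \<open>P \<subseteq> D\<close>])
  have fin: "finite \<T>" unfolding \<T>_def by simp
  have card_\<T>: "even (card \<T>)" using bij_betw_same_card[OF bij] \<open>even (card P)\<close> by simp
  have anf: "anf_coeff b (\<lambda>p. p \<in> P) X \<longleftrightarrow> odd (card {T \<in> \<T>. T \<subseteq> X})" if "X \<subseteq> {..<n}" for X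
  proof -
    have "{T. T \<subseteq> X \<and> F2_coords b T \<in> P} = {T \<in> \<T>. T \<subseteq> X}" unfolding \<T>_def using that by auto
    thus ?thesis unfolding anf_coeff_def by simp
  qed
  have "\<exists>j<n. odd (card {T \<in> \<T>. j \<in> T})"
  proof (rule ccontr)
    assume "\<not> (\<exists>j<n. odd (card {T \<in> \<T>. j \<in> T}))"
    hence "(\<Sum>t<n. of_nat (card {T \<in> \<T>. t \<in> T}) * fst (b t)) = 0"
      using char2_of_nat_even[OF char2] by (intro sum.neutral) auto
    moreover have "(\<Sum>p\<in>P. fst p) = (\<Sum>T\<in>\<T>. fst (F2_coords b T))"
      by (rule sum.reindex_bij_betw[OF bij, symmetric])
    ultimately show False using sum_fst_F2_coords[OF fin, of n b] sum_nonzero unfolding \<T>_def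
      by auto
  qed
  then obtain j where j: "j < n" "odd (card {T \<in> \<T>. j \<in> T})" by blast
  have "card \<T> = card {T \<in> \<T>. j \<in> T} + card {T \<in> \<T>. j \<notin> T}"
    using fin by (subst card_Un_disjoint[symmetric]) (auto intro: arg_cong[of _ _ card])
  moreover have "{T \<in> \<T>. T \<subseteq> {..<n} - {j}} = {T \<in> \<T>. j \<notin> T}" unfolding \<T>_def by auto
  moreover have "{T \<in> \<T>. T \<subseteq> {..<n}} = \<T>" unfolding \<T>_def by auto
  ultimately show ?thesis
    using j card_\<T> anf[of "{..<n} - {j}"] anf[of "{..<n}"] by (intro alg_degree_eq_pred) auto
qed

section \<open>A field of order 2^rm with a primitive element\<close>

locale primitive_tower =
  fixes r m :: nat and \<alpha> :: "'a::{field,finite}"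
  assumes r_ge_1: "r \<ge> 1" and m_ge_3: "m \<ge> 3"
    and card_UNIV: "card (UNIV :: 'a set) = 2 ^ (r * m)"
    and primitive: "\<forall>x::'a. x \<noteq> 0 \<longrightarrow> (\<exists>i::nat. x = \<alpha> ^ i)"
begin

abbreviation "q \<equiv> (2::nat) ^ (r * m)"
abbreviation "Q \<equiv> (2::nat) ^ m"
abbreviation "N \<equiv> (2::nat) ^ (r * m - 1)"

lemma rm_ge_3: "r * m \<ge> 3"
  using r_ge_1 m_ge_3 by (metis le_trans mult_le_mono1 mult_1)

lemma Q_ge_8: "Q \<ge> 8"
  using power_increasing[of 3 m "2::nat"] m_ge_3 by simp

lemma Q_pred_pos: "Q - 1 > 0"
  using Q_ge_8 by linarith

lemma int_Q_pred_pos: "int (Q - 1) > 0"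
  by (simp only: of_nat_0_less_iff Q_pred_pos)

lemma int_Q_pred: "int (Q - 1) = 2 ^ m - 1"
  using Q_ge_8 by (simp add: of_nat_diff)

lemma q_ge_8: "q \<ge> 8"
  using power_increasing[of 3 "r * m" "2::nat"] rm_ge_3 by simp

lemma q_eq_double_N: "q = 2 * N"
  using rm_ge_3 by (simp flip: power_Suc)

lemma N_even: "even N"
  using rm_ge_3 by simp

lemma two_eq_zero: "(2::'a) = 0"
  by (rule two_eq_zero_if_card_eq_power_two[OF card_UNIV]) (use rm_ge_3 in linarith)

lemma alpha_nonzero: "\<alpha> \<noteq> 0"
  using primitive_element_nonzero[OF primitive] card_UNIV q_ge_8 by simp

lemma alpha_power_eq_one_iff: "\<alpha> ^ i = 1 \<longleftrightarrow> (q - 1) dvd i"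
  using primitive_element_power_eq_one_iff[OF primitive alpha_nonzero] card_UNIV by simp

lemma power_q_pred_eq_one: "(x::'a) \<noteq> 0 \<Longrightarrow> x ^ (q - 1) = 1"
  using primitive alpha_power_eq_one_iff
  by (metis dvd_refl power_mult mult.commute power_one)

lemma inj_on_alpha_power: "inj_on (\<lambda>t. \<alpha> ^ t) {k..<k + (q - 1)}"
  by (rule inj_on_power_window[OF alpha_nonzero alpha_power_eq_one_iff])

definition cofactor :: nat where "cofactor = (q - 1) div (Q - 1)"

definition \<beta> :: 'a where "\<beta> = \<alpha> ^ cofactor"

lemma q_pred_eq: "q - 1 = (Q - 1) * cofactor"
proof -
  have "(Q - 1) dvd (Q ^ r - 1)" by (rule pred_dvd_power_pred) simp
  thus ?thesis unfolding cofactor_def by (simp add: power_mult[symmetric] mult.commute)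
qed

lemma cofactor_pos: "cofactor > 0"
  using q_pred_eq q_ge_8 by (cases "cofactor = 0") auto

lemma beta_power_eq_one_iff: "\<beta> ^ k = 1 \<longleftrightarrow> (Q - 1) dvd k"
  unfolding \<beta>_def power_mult[symmetric] alpha_power_eq_one_iff q_pred_eq
  using cofactor_pos by (simp add: mult.commute)

lemma beta_nonzero: "\<beta> \<noteq> 0"
  unfolding \<beta>_def using alpha_nonzero by simp

lemma subfield_power_Q_pred:
  assumes "(y::'a) \<in> subfield_K m" and "y \<noteq> 0"
  shows "y ^ (Q - 1) = 1"
proof -
  have "y * y ^ (Q - 1) = y * 1"
    using assms(1) Q_ge_8 unfolding subfield_K_def by (simp flip: power_Suc)
  thus ?thesis using assms(2) by simp
qed

lemma subfield_nonzero_eq_image: "subfield_K m - {0} = (\<lambda>k. \<beta> ^ k) ` {..<Q - 1}"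
proof (intro equalityI subsetI)
  fix y :: 'a assume y: "y \<in> subfield_K m - {0}"
  then obtain i where i: "y = \<alpha> ^ i" using primitive by auto
  have "\<alpha> ^ (i * (Q - 1)) = 1" using subfield_power_Q_pred[of y] y i by (simp add: power_mult)
  hence "(Q - 1) * cofactor dvd (Q - 1) * i"
    unfolding alpha_power_eq_one_iff q_pred_eq by (simp add: mult.commute)
  hence "cofactor dvd i" using Q_ge_8 by simp
  then obtain k where "y = \<beta> ^ k" unfolding \<beta>_def using i by (auto simp: power_mult)
  hence "y = \<beta> ^ (k mod (Q - 1))"
    using power_eq_power_mod[of \<beta> "Q - 1" k] beta_power_eq_one_iff[of "Q - 1"] by simp
  thus "y \<in> (\<lambda>k. \<beta> ^ k) ` {..<Q - 1}" using Q_ge_8 by auto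
next
  fix y :: 'a assume "y \<in> (\<lambda>k. \<beta> ^ k) ` {..<Q - 1}"
  then obtain k where k: "y = \<beta> ^ k" by auto
  have "y ^ Q = y * y ^ (Q - 1)" using Q_ge_8 by (simp flip: power_Suc)
  also have "y ^ (Q - 1) = (\<beta> ^ (Q - 1)) ^ k" using k by (simp add: power_mult[symmetric] mult.commute)
  also have "\<dots> = 1" using beta_power_eq_one_iff[of "Q - 1"] by simp
  finally show "y \<in> subfield_K m - {0}" using k beta_nonzero unfolding subfield_K_def by simp
qed

lemma inj_on_beta_power: "inj_on (\<lambda>k. \<beta> ^ k) {..<Q - 1}"
  using inj_on_power_window[OF beta_nonzero beta_power_eq_one_iff, of 0] by (simp add: lessThan_atLeast0)

lemma card_subfield_nonzero: "card (subfield_K m - {0::'a}) = Q - 1"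
  unfolding subfield_nonzero_eq_image using card_image[OF inj_on_beta_power] by simp

lemma card_subfield: "card (subfield_K m :: 'a set) = Q"
proof -
  have "(0::'a) \<in> subfield_K m" unfolding subfield_K_def by simp
  hence "card (subfield_K m :: 'a set) = Suc (card (subfield_K m - {0::'a}))"
    by (metis card_Suc_Diff1 finite)
  thus ?thesis using card_subfield_nonzero Q_ge_8 by simp
qed

lemma sum_subfield_nonzero_powi:
  assumes "coprime u (2 ^ m - 1)"
  shows "(\<Sum>y\<in>subfield_K m - {0::'a}. y powi u) = 0"
proof -
  define \<rho> where "\<rho> = \<beta> powi u"
  have \<rho>_order: "\<rho> ^ k = 1 \<longleftrightarrow> int (Q - 1) dvd u * int k" for k
    unfolding \<rho>_def power_int_power'
    using power_int_eq_one_iff[OF beta_power_eq_one_iff Q_pred_pos] by simp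
  have "\<rho> \<noteq> 1"
  proof
    assume "\<rho> = 1"
    hence "int (Q - 1) dvd u" using \<rho>_order[of 1] by simp
    hence "int (Q - 1) dvd 1" using assms int_Q_pred by (metis coprime_common_divisor dvd_refl)
    hence "Q - 1 dvd 1" by (metis int_dvd_int_iff of_nat_1)
    thus False using Q_ge_8 dvd_imp_le[of "Q - 1" 1] by linarith
  qed
  moreover have "\<rho> ^ (Q - 1) = 1" using \<rho>_order by simp
  ultimately have "(\<Sum>k<Q - 1. \<rho> ^ k) = 0" using one_diff_power_eq[of \<rho> "Q - 1"] by simp
  moreover have "(\<Sum>y\<in>subfield_K m - {0}. y powi u) = (\<Sum>k<Q - 1. (\<beta> ^ k) powi u)"
    unfolding subfield_nonzero_eq_image by (rule sum.reindex[OF inj_on_beta_power, unfolded comp_def])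
  moreover have "(\<beta> ^ k) powi u = \<rho> ^ k" for k
    unfolding \<rho>_def by (simp add: power_int_power power_int_power' mult.commute)
  ultimately show ?thesis by simp
qed

lemma Delta_set_eq_image: "Delta_set r m \<alpha> k = (\<lambda>t. \<alpha> ^ t) ` {k..<k + N}"
proof -
  have "k \<le> i \<and> i \<le> k + n - 1 \<longleftrightarrow> i \<in> {k..<k + n}" if "n > 0" for i n :: nat
    using that by auto
  moreover have "N > 0" by simp
  ultimately have "k \<le> i \<and> i \<le> k + N - 1 \<longleftrightarrow> i \<in> {k..<k + N}" for i by blast
  thus ?thesis unfolding Delta_set_def by (auto simp: image_def)
qed

lemma inj_on_Delta_window: "inj_on (\<lambda>t. \<alpha> ^ t) {k..<k + N}"
proof -
  have "N > 0" by simp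
  hence "k + N \<le> k + (q - 1)" using q_eq_double_N by linarith
  thus ?thesis by (intro inj_on_subset[OF inj_on_alpha_power[of k]]) auto
qed

lemma card_Delta_set: "card (Delta_set r m \<alpha> k) = N"
  unfolding Delta_set_eq_image using card_image[OF inj_on_Delta_window[of k]] by simp

lemma zero_notin_Delta_set: "(0::'a) \<notin> Delta_set r m \<alpha> k"
  unfolding Delta_set_eq_image using alpha_nonzero by auto

lemma sum_Delta_set_nonzero: "(\<Sum>\<gamma>\<in>Delta_set r m \<alpha> k. \<gamma>) \<noteq> 0"
proof -
  have "N \<ge> 2" using power_increasing[of 1 "r * m - 1" "2::nat"] rm_ge_3 by simp
  hence "\<not> (q - 1) dvd N" using q_eq_double_N by (auto dest: dvd_imp_le)
  hence "1 - \<alpha> ^ N \<noteq> 0" using alpha_power_eq_one_iff[of N] by simp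
  hence "(\<Sum>t<N. \<alpha> ^ t) \<noteq> 0" using one_diff_power_eq[of \<alpha> N] by auto
  moreover have "(\<Sum>\<gamma>\<in>Delta_set r m \<alpha> k. \<gamma>) = \<alpha> ^ k * (\<Sum>t<N. \<alpha> ^ t)"
    unfolding Delta_set_eq_image sum.reindex[OF inj_on_Delta_window] sum.atLeastLessThan_shift_0[of _ k]
    by (simp add: atLeast0LessThan power_add sum_distrib_left)
  ultimately show ?thesis using alpha_nonzero by simp
qed

definition Acoef :: "nat \<Rightarrow> nat \<Rightarrow> 'a" where
  "Acoef k i = (inverse \<alpha>) ^ (i * k) * (1 + (inverse \<alpha>) ^ i) ^ (N - 1)"

lemma Acoef_eq_sum: "Acoef k i = (\<Sum>\<gamma>\<in>Delta_set r m \<alpha> k. (inverse \<gamma>) ^ i)"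
proof -
  have "(1 + (inverse \<alpha>) ^ i) ^ (N - 1) = (\<Sum>t<N. ((inverse \<alpha>) ^ i) ^ t)"
    by (rule char2_one_add_power_pred[OF two_eq_zero]) (use rm_ge_3 in linarith)
  hence "Acoef k i = (\<Sum>t<N. (inverse \<alpha>) ^ (i * k) * ((inverse \<alpha>) ^ i) ^ t)"
    unfolding Acoef_def by (simp add: sum_distrib_left)
  also have "\<dots> = (\<Sum>t<N. (inverse (\<alpha> ^ (k + t))) ^ i)"
  proof (rule sum.cong[OF refl])
    fix t
    have "(inverse \<alpha>) ^ (i * k) * ((inverse \<alpha>) ^ i) ^ t = (inverse \<alpha>) ^ (i * k + i * t)"
      by (simp add: power_add power_mult)
    also have "\<dots> = (inverse (\<alpha> ^ (k + t))) ^ i"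
      by (simp add: power_inverse[symmetric] power_mult[symmetric] algebra_simps)
    finally show "(inverse \<alpha>) ^ (i * k) * ((inverse \<alpha>) ^ i) ^ t = (inverse (\<alpha> ^ (k + t))) ^ i" .
  qed
  also have "\<dots> = (\<Sum>\<gamma>\<in>Delta_set r m \<alpha> k. (inverse \<gamma>) ^ i)"
    unfolding Delta_set_eq_image sum.reindex[OF inj_on_Delta_window] sum.atLeastLessThan_shift_0[of _ k]
    by (simp add: atLeast0LessThan)
  finally show ?thesis .
qed

lemma sum_powers_div:
  fixes x \<gamma> :: 'a
  assumes "\<gamma> \<noteq> 0"
  shows "(\<Sum>i\<in>{1..<q - 1}. (x * inverse \<gamma>) ^ i) = (if x = 0 then 0 else 1 + (if \<gamma> = x then 1 else 0))"
proof (cases "x = 0")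
  case False
  have "odd (q - 1)" using r_ge_1 m_ge_3 by simp
  moreover have "(x * inverse \<gamma>) ^ (q - 1) = 1"
    by (rule power_q_pred_eq_one) (use assms False in simp)
  ultimately have "(\<Sum>i\<in>{1..<q - 1}. (x * inverse \<gamma>) ^ i) = (if x * inverse \<gamma> = 1 then 0 else 1)"
    by (intro char2_sum_powers_eq_indicator[OF two_eq_zero])
  moreover have "x * inverse \<gamma> = 1 \<longleftrightarrow> \<gamma> = x" using assms by (auto simp: field_simps)
  moreover have "(1::'a) + 1 = 0" by (rule char2_add_self[OF two_eq_zero])
  ultimately show ?thesis using False by (cases "\<gamma> = x") simp_all
next
  case True
  have "(\<Sum>i\<in>{1..<q - 1}. (x * inverse \<gamma>) ^ i) = 0" using True by (intro sum.neutral) auto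
  thus ?thesis using True by simp
qed

lemma indicator_Delta_set_eq_poly:
  "(if x \<in> Delta_set r m \<alpha> k then 1 else 0) = (\<Sum>i\<in>{1..<q - 1}. Acoef k i * x ^ i)"
proof -
  have "(\<Sum>i\<in>{1..<q - 1}. Acoef k i * x ^ i)
      = (\<Sum>i\<in>{1..<q - 1}. \<Sum>\<gamma>\<in>Delta_set r m \<alpha> k. (x * inverse \<gamma>) ^ i)"
    unfolding Acoef_eq_sum sum_distrib_right
    by (intro sum.cong refl) (simp add: power_mult_distrib mult.commute)
  also have "\<dots> = (\<Sum>\<gamma>\<in>Delta_set r m \<alpha> k. if x = 0 then 0 else 1 + (if \<gamma> = x then 1 else 0))"
  proof (subst sum.swap, rule sum.cong[OF refl])
    fix \<gamma> assume "\<gamma> \<in> Delta_set r m \<alpha> k"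
    hence "\<gamma> \<noteq> 0" using zero_notin_Delta_set by blast
    thus "(\<Sum>i\<in>{1..<q - 1}. (x * inverse \<gamma>) ^ i) = (if x = 0 then 0 else 1 + (if \<gamma> = x then 1 else 0))"
      by (rule sum_powers_div)
  qed
  also have "\<dots> = (if x \<in> Delta_set r m \<alpha> k then 1 else 0)"
  proof (cases "x = 0")
    case False
    hence "(\<Sum>\<gamma>\<in>Delta_set r m \<alpha> k. if x = 0 then 0 else 1 + (if \<gamma> = x then 1 else 0))
        = of_nat N + (if x \<in> Delta_set r m \<alpha> k then 1 else 0)"
      by (simp add: sum.distrib card_Delta_set)
    also have "(of_nat N :: 'a) = 0" by (rule char2_of_nat_even[OF two_eq_zero N_even])
    finally show ?thesis by simp
  qed (simp add: zero_notin_Delta_set)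
  finally show ?thesis by simp
qed

lemma bivariate_rep_unique:
  fixes F :: "'a \<times> 'a \<Rightarrow> 'a"
  assumes c: "is_bivariate_rep r m F c" and c': "is_bivariate_rep r m F c'"
  shows "c = c'"
proof (intro ext)
  fix i j
  show "c i j = c' i j"
  proof (cases "q \<le> i \<or> Q \<le> j")
    case True thus ?thesis using c c' unfolding is_bivariate_rep_def by metis
  next
    case False
    define d where "d i j = c i j - c' i j" for i j
    have vanish: "(\<Sum>i<q. \<Sum>j<Q. d i j * x ^ i * y ^ j) = 0" if "y \<in> subfield_K m" for x y
      using c c' that unfolding is_bivariate_rep_def d_def
      by (simp add: left_diff_distrib sum_subtractf)
    have "(\<Sum>j<Q. d i j * y ^ j) = 0" if "y \<in> subfield_K m" for y
    proof (rule coeff_eq_zero_if_vanishes_on[where R = UNIV and n = q and a = "\<lambda>i. \<Sum>j<Q. d i j * y ^ j"])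
      show "\<forall>x\<in>UNIV. (\<Sum>i<q. (\<Sum>j<Q. d i j * y ^ j) * x ^ i) = 0"
        using vanish[OF that] by (simp add: sum_distrib_left sum_distrib_right mult_ac)
    qed (use False card_UNIV in auto)
    hence "d i j = 0"
      using False card_subfield
      by (intro coeff_eq_zero_if_vanishes_on[where R = "subfield_K m" and n = Q and a = "d i"]) auto
    thus ?thesis unfolding d_def by simp
  qed
qed

lemma bivariate_rep_eqI: "is_bivariate_rep r m (F :: 'a \<times> 'a \<Rightarrow> 'a) c \<Longrightarrow> bivariate_rep r m F = c"
  unfolding bivariate_rep_def by (rule the_equality) (auto intro: bivariate_rep_unique)

definition bar :: "int \<Rightarrow> nat \<Rightarrow> nat" where
  "bar u i = nat ((u * int i) mod (2 ^ m - 1))"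

lemma int_bar: "int (bar u i) = (u * int i) mod int (Q - 1)"
  using int_Q_pred_pos unfolding bar_def int_Q_pred[symmetric] by simp

lemma bar_less: "bar u i < Q - 1"
proof -
  have "int (bar u i) < int (Q - 1)" unfolding int_bar by (rule pos_mod_bound[OF int_Q_pred_pos])
  thus ?thesis by (simp only: of_nat_less_iff)
qed

lemma bar_eq_zero_if_dvd:
  assumes "(Q - 1) dvd i"
  shows "bar u i = 0"
proof -
  have "int (Q - 1) dvd int i" using assms by (simp only: int_dvd_int_iff)
  hence "int (Q - 1) dvd u * int i" by (rule dvd_mult)
  hence "int (bar u i) = 0" unfolding int_bar by (rule dvd_imp_mod_0)
  thus ?thesis by simp
qed

lemma subfield_power_Q_pred_minus_bar:
  fixes y :: 'a
  assumes "y \<in> subfield_K m" and "y \<noteq> 0"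
  shows "y ^ (Q - 1 - bar u i) = inverse ((y powi u) ^ i)"
proof -
  have y_order: "y ^ (Q - 1) = 1" by (rule subfield_power_Q_pred[OF assms])
  have "y ^ bar u i = y powi (u * int i)"
    by (simp add: bar_def power_int_eq_power_mod[OF y_order Q_pred_pos] int_Q_pred)
  hence "y ^ (Q - 1 - bar u i) * (y powi u) ^ i = y ^ (Q - 1 - bar u i + bar u i)"
    by (simp add: power_int_power' power_add)
  also have "\<dots> = 1" using y_order bar_less[of u i] by simp
  finally show ?thesis using assms(2) by (simp add: field_simps)
qed

text \<open>The first two sums of the paper are merged, since \<open>bar u i = 0\<close> when \<open>2^m - 1\<close>
  divides \<open>i\<close>.\<close>

definition rep_coeffs :: "int \<Rightarrow> nat \<Rightarrow> nat \<Rightarrow> nat \<Rightarrow> nat \<Rightarrow> 'a" where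
  "rep_coeffs u s l i j =
     (if i \<in> {1..<q - 1} \<and> j = Q - 1 - bar u i then Acoef s i else 0)
   + (if i \<in> {1..<q - 1} \<and> (j = 0 \<or> j = Q - 1) then Acoef l i else 0)"

lemma multiples_in_range_iff:
  "(\<exists>k. 1 \<le> k \<and> k \<le> (q - 1) div (Q - 1) - 1 \<and> i = (Q - 1) * k)
     \<longleftrightarrow> i \<in> {1..<q - 1} \<and> (Q - 1) dvd i"
proof -
  have below: "(Q - 1) * k < q - 1 \<longleftrightarrow> k \<le> cofactor - 1" for k
    using q_pred_eq cofactor_pos Q_ge_8 by auto
  have "1 \<le> k \<longleftrightarrow> 1 \<le> (Q - 1) * k" for k using Q_ge_8 by (cases k) auto
  hence "(\<exists>k. 1 \<le> k \<and> k \<le> cofactor - 1 \<and> i = (Q - 1) * k)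
      \<longleftrightarrow> (\<exists>k. 1 \<le> i \<and> i < q - 1 \<and> i = (Q - 1) * k)"
    using below by blast
  thus ?thesis unfolding cofactor_def[symmetric] by (auto simp: dvd_def)
qed

lemma paper_coeffs_eq_rep_coeffs:
  "(\<lambda>i j. (if 1 \<le> i \<and> i \<le> q - 2 \<and> \<not> (Q - 1) dvd i \<and> j = Q - 1 - bar u i then Acoef s i else 0)
       + (if j = Q - 1 \<and> (\<exists>k. 1 \<le> k \<and> k \<le> (q - 1) div (Q - 1) - 1 \<and> i = (Q - 1) * k)
          then Acoef s i else 0)
       + (if 1 \<le> i \<and> i \<le> q - 2 \<and> (j = 0 \<or> j = Q - 1) then Acoef l i else 0))
   = rep_coeffs u s l" (is "?paper = _")
proof (intro ext)
  fix i j
  let ?I = "{1..<q - 1}"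
  have first: "(1 \<le> i \<and> i \<le> q - 2 \<and> \<not> (Q - 1) dvd i \<and> j = Q - 1 - bar u i)
      = (i \<in> ?I \<and> j = Q - 1 - bar u i \<and> \<not> (Q - 1) dvd i)"
    using q_ge_8 by auto
  have second: "(j = Q - 1 \<and> (\<exists>k. 1 \<le> k \<and> k \<le> (q - 1) div (Q - 1) - 1 \<and> i = (Q - 1) * k))
      = (i \<in> ?I \<and> j = Q - 1 - bar u i \<and> (Q - 1) dvd i)"
    unfolding multiples_in_range_iff using bar_eq_zero_if_dvd[of i u] by auto
  have third: "(1 \<le> i \<and> i \<le> q - 2 \<and> (j = 0 \<or> j = Q - 1)) = (i \<in> ?I \<and> (j = 0 \<or> j = Q - 1))"
    using q_ge_8 by auto
  show "?paper i j = rep_coeffs u s l i j"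
    unfolding first second third rep_coeffs_def by (cases "(Q - 1) dvd i") simp_all
qed

lemma sum_rep_coeffs:
  "(\<Sum>i<q. \<Sum>j<Q. rep_coeffs u s l i j * x ^ i * y ^ j)
   = (\<Sum>i\<in>{1..<q - 1}. Acoef s i * x ^ i * y ^ (Q - 1 - bar u i))
     + (\<Sum>i\<in>{1..<q - 1}. Acoef l i * x ^ i) * (1 + y ^ (Q - 1))"
proof -
  let ?I = "{1..<q - 1}"
  have "rep_coeffs u s l i j * x ^ i * y ^ j
      = (if j = Q - 1 - bar u i then if i \<in> ?I then Acoef s i * x ^ i * y ^ (Q - 1 - bar u i) else 0 else 0)
      + (if j = 0 then if i \<in> ?I then Acoef l i * x ^ i else 0 else 0)
      + (if j = Q - 1 then if i \<in> ?I then Acoef l i * x ^ i * y ^ (Q - 1) else 0 else 0)" for i j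
    using Q_ge_8 unfolding rep_coeffs_def by (simp add: distrib_right)
  hence inner: "(\<Sum>j<Q. rep_coeffs u s l i j * x ^ i * y ^ j)
      = (if i \<in> ?I then Acoef s i * x ^ i * y ^ (Q - 1 - bar u i) else 0)
      + (if i \<in> ?I then Acoef l i * x ^ i else 0)
      + (if i \<in> ?I then Acoef l i * x ^ i * y ^ (Q - 1) else 0)" for i
    using Q_ge_8 by (simp add: sum.distrib)
  have "{..<q} \<inter> ?I = ?I" by auto
  hence restrict: "(\<Sum>i<q. if i \<in> ?I then g i else 0) = (\<Sum>i\<in>?I. g i)" for g :: "nat \<Rightarrow> 'a"
    using sum.inter_restrict[of "{..<q}" g ?I] by simp
  have "(\<Sum>i<q. \<Sum>j<Q. rep_coeffs u s l i j * x ^ i * y ^ j)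
      = (\<Sum>i\<in>?I. Acoef s i * x ^ i * y ^ (Q - 1 - bar u i)) + (\<Sum>i\<in>?I. Acoef l i * x ^ i)
        + (\<Sum>i\<in>?I. Acoef l i * x ^ i * y ^ (Q - 1))"
    by (simp only: inner sum.distrib restrict)
  thus ?thesis by (simp add: distrib_left sum_distrib_right)
qed

definition F_support :: "int \<Rightarrow> nat \<Rightarrow> nat \<Rightarrow> ('a \<times> 'a) set" where
  "F_support u s l =
     {(\<gamma> * y powi u, y) | \<gamma> y. y \<in> subfield_K m \<and> y \<noteq> 0 \<and> \<gamma> \<in> Delta_set r m \<alpha> s}
   \<union> {(\<gamma>, 0) | \<gamma>. \<gamma> \<in> Delta_set r m \<alpha> l}"

lemma F_support_eq_Un_image:
  "F_support u s l = (\<lambda>(\<gamma>, y). (\<gamma> * y powi u, y)) ` (Delta_set r m \<alpha> s \<times> (subfield_K m - {0}))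
                   \<union> (\<lambda>\<gamma>. (\<gamma>, 0)) ` Delta_set r m \<alpha> l"
  unfolding F_support_def by auto

lemma mem_F_support_zero: "(x, 0) \<in> F_support u s l \<longleftrightarrow> x \<in> Delta_set r m \<alpha> l"
  unfolding F_support_def by auto

lemma mem_F_support_nonzero:
  assumes "y \<in> subfield_K m" and "y \<noteq> 0"
  shows "(x, y) \<in> F_support u s l \<longleftrightarrow> x * inverse (y powi u) \<in> Delta_set r m \<alpha> s"
proof -
  have "y powi u \<noteq> 0" using assms(2) by simp
  hence "x = \<gamma> * y powi u \<longleftrightarrow> \<gamma> = x * inverse (y powi u)" for \<gamma> by (auto simp: field_simps)
  thus ?thesis unfolding F_support_def using assms by auto
qed

lemma rep_coeffs_is_bivariate_rep:
  "is_bivariate_rep r m (\<lambda>p. if p \<in> F_support u s l then 1 else 0) (rep_coeffs u s l)"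
  unfolding is_bivariate_rep_def
proof (intro conjI allI impI)
  fix i j :: nat
  assume "q \<le> i \<or> Q \<le> j"
  thus "rep_coeffs u s l i j = 0" using Q_ge_8 unfolding rep_coeffs_def by auto
next
  fix x y :: 'a
  assume y: "y \<in> subfield_K m"
  show "(if (x, y) \<in> F_support u s l then 1 else 0)
      = (\<Sum>i<q. \<Sum>j<Q. rep_coeffs u s l i j * x ^ i * y ^ j)"
  proof (cases "y = 0")
    case True
    have zero_power_exponent: "(0::'a) ^ (Q - 1 - bar u i) = 0" for i
      using bar_less[of u i] by (simp add: zero_power)
    show ?thesis unfolding sum_rep_coeffs True zero_power_exponent using Q_ge_8
      by (simp add: mem_F_support_zero indicator_Delta_set_eq_poly)
  next
    case False
    have indicator_zero: "1 + y ^ (Q - 1) = 0"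
      using subfield_power_Q_pred[OF y False] two_eq_zero by simp
    have rescale: "Acoef s i * x ^ i * y ^ (Q - 1 - bar u i) = Acoef s i * (x * inverse (y powi u)) ^ i"
      for i using subfield_power_Q_pred_minus_bar[OF y False]
      by (simp add: power_mult_distrib power_inverse)
    show ?thesis unfolding sum_rep_coeffs indicator_zero rescale
      by (simp add: mem_F_support_nonzero[OF y False] indicator_Delta_set_eq_poly)
  qed
qed

lemma F_support_subset: "F_support u s l \<subseteq> UNIV \<times> subfield_K m"
  unfolding F_support_def subfield_K_def by auto

lemma inj_on_F_support_map: "inj_on (\<lambda>(\<gamma>, y). (\<gamma> * y powi u, y)) (X \<times> (subfield_K m - {0::'a}))"
  by (auto simp: inj_on_def)

lemma card_F_support_even: "even (card (F_support u s l))"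
proof -
  have "card (F_support u s l) = N * (Q - 1) + N"
    unfolding F_support_eq_Un_image
    by (subst card_Un_disjoint)
      (auto simp: card_image[OF inj_on_F_support_map] card_image inj_on_def card_cartesian_product
        card_Delta_set card_subfield_nonzero zero_notin_Delta_set)
  thus ?thesis using N_even by simp
qed

lemma sum_fst_F_support_nonzero:
  assumes "coprime u (2 ^ m - 1)"
  shows "(\<Sum>p\<in>F_support u s l. fst p) \<noteq> 0"
proof -
  let ?D = "Delta_set r m \<alpha> s \<times> (subfield_K m - {0::'a})"
  let ?f = "\<lambda>(\<gamma>, y). (\<gamma> * y powi u, y)"
  have "(\<Sum>p\<in>?f ` ?D. fst p) = (\<Sum>p\<in>?D. fst (?f p))"
    by (rule sum.reindex[OF inj_on_F_support_map, unfolded comp_def])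
  also have "\<dots> = (\<Sum>\<gamma>\<in>Delta_set r m \<alpha> s. \<Sum>y\<in>subfield_K m - {0}. \<gamma> * y powi u)"
    by (simp add: sum.cartesian_product case_prod_beta')
  also have "\<dots> = (\<Sum>\<gamma>\<in>Delta_set r m \<alpha> s. \<gamma>) * (\<Sum>y\<in>subfield_K m - {0::'a}. y powi u)"
    by (rule sum_product[symmetric])
  also have "\<dots> = 0" using sum_subfield_nonzero_powi[OF assms] by simp
  finally have first: "(\<Sum>p\<in>?f ` ?D. fst p) = 0" .
  have "(\<Sum>p\<in>(\<lambda>\<gamma>. (\<gamma>, 0::'a)) ` Delta_set r m \<alpha> l. fst p) = (\<Sum>\<gamma>\<in>Delta_set r m \<alpha> l. \<gamma>)"
    by (simp add: sum.reindex inj_on_def)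
  hence "(\<Sum>p\<in>(\<lambda>\<gamma>. (\<gamma>, 0::'a)) ` Delta_set r m \<alpha> l. fst p) \<noteq> 0"
    using sum_Delta_set_nonzero[of l] by simp
  moreover have "?f ` ?D \<inter> (\<lambda>\<gamma>. (\<gamma>, 0)) ` Delta_set r m \<alpha> l = {}" by auto
  ultimately show ?thesis
    unfolding F_support_eq_Un_image using first by (simp add: sum.union_disjoint)
qed

lemma alg_degree_F_support:
  assumes "coprime u (2 ^ m - 1)" and "is_F2_basis ((r + 1) * m) (UNIV \<times> subfield_K m) b"
  shows "alg_degree ((r + 1) * m) b (\<lambda>p. p \<in> F_support u s l) = (r + 1) * m - 1"
  by (rule alg_degree_eq_pred_if_sum_nonzero[OF two_eq_zero assms(2) F_support_subset
        card_F_support_even sum_fst_F_support_nonzero[OF assms(1)]])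

end

theorem theorem4:
  fixes r m s l :: nat and u :: int and \<alpha> :: "'a::{field,finite}"
  assumes "odd r" and "r \<ge> 1" and "m \<ge> 3"
    and "card (UNIV :: 'a set) = 2 ^ (r * m)"
    and "coprime u (2 ^ m - 1)"
    and "\<forall>x::'a. x \<noteq> 0 \<longrightarrow> (\<exists>i::nat. x = \<alpha> ^ i)"
    and "s \<le> 2 ^ (r * m) - 2" and "l \<le> 2 ^ (r * m) - 2"
  defines "S \<equiv> {(\<gamma> * y powi u, y) | \<gamma> y. y \<in> subfield_K m \<and> y \<noteq> 0 \<and> \<gamma> \<in> Delta_set r m \<alpha> s}
             \<union> {(\<gamma>, 0) | \<gamma>. \<gamma> \<in> Delta_set r m \<alpha> l}"
    and "A \<equiv> \<lambda>t::nat. \<lambda>i::nat. (inverse \<alpha>) ^ (i * t) * (1 + (inverse \<alpha>) ^ i) ^ (2 ^ (r * m - 1) - 1)"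
    and "ubar \<equiv> \<lambda>i::nat. nat ((u * int i) mod (2 ^ m - 1))"
  shows "bivariate_rep r m (\<lambda>p. if p \<in> S then 1 else 0) =
           (\<lambda>i j. (if 1 \<le> i \<and> i \<le> 2 ^ (r * m) - 2 \<and> \<not> (2 ^ m - 1) dvd i \<and> j = 2 ^ m - 1 - ubar i
                     then A s i else 0)
                 + (if j = 2 ^ m - 1 \<and> (\<exists>k. 1 \<le> k \<and> k \<le> (2 ^ (r * m) - 1) div (2 ^ m - 1) - 1
                                          \<and> i = (2 ^ m - 1) * k)
                     then A s i else 0)
                 + (if 1 \<le> i \<and> i \<le> 2 ^ (r * m) - 2 \<and> (j = 0 \<or> j = 2 ^ m - 1)
                     then A l i else 0))
         \<and> (\<forall>b. is_F2_basis ((r + 1) * m) (UNIV \<times> subfield_K m) b \<longrightarrow>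
                alg_degree ((r + 1) * m) b (\<lambda>p. p \<in> S) = (r + 1) * m - 1)"
proof -
  interpret primitive_tower r m \<alpha> using assms(2,3,4,6) by unfold_locales auto
  have S: "S = F_support u s l" unfolding S_def F_support_def ..
  have A: "A = Acoef" unfolding A_def Acoef_def by (intro ext) simp
  have ubar: "ubar = bar u" unfolding ubar_def bar_def by (intro ext) simp
  have rep: "bivariate_rep r m (\<lambda>p. if p \<in> F_support u s l then 1 else 0) = rep_coeffs u s l"
    by (rule bivariate_rep_eqI[OF rep_coeffs_is_bivariate_rep])
  show ?thesis
    unfolding S A ubar rep paper_coeffs_eq_rep_coeffs using alg_degree_F_support[OF assms(5)] by blast
qed

end
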